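(* For every integer $m\ge2$ and every graph $G$, $\hom(S_{2,1^{m-2}};G)^{m}\ge \hom(S_{2,1^{m-1}};G)^{m-1}$. (For $m=2$ this is the path inequality $\hom(P_2;G)^2\ge\hom(P_3;G)$, where $P_\ell$ is the path with $\ell$ edges.)
   Context: All graphs are finite; $\hom(H;G)$ is the number of graph homomorphisms from $H$ to $G$. For $k\ge0$, $S_{2,1^k}$ is the tree with vertex set $\{1,\ldots,k+3\}$ and edge set $\{\{1,j\}:2\le j\le k+2\}\cup\{\{k+2,k+3\}\}$; note $S_{2,1^0}=P_2$ and $S_{2,1^1}=P_3$. *)

theory Defs
  imports Main "HOL-Library.FuncSet"
begin

definition simple_graph :: "'a set \<Rightarrow> ('a \<Rightarrow> 'a \<Rightarrow> bool) \<Rightarrow> bool" where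
  "simple_graph V E \<longleftrightarrow> finite V \<and> (\<forall>x y. E x y \<longrightarrow> E y x) \<and> (\<forall>x. \<not> E x x)
     \<and> (\<forall>x y. E x y \<longrightarrow> x \<in> V \<and> y \<in> V)"

definition hom_count :: "'a set \<Rightarrow> ('a \<Rightarrow> 'a \<Rightarrow> bool) \<Rightarrow> 'b set \<Rightarrow> ('b \<Rightarrow> 'b \<Rightarrow> bool) \<Rightarrow> nat" where
  "hom_count VH EH VG EG =
     card {f \<in> VH \<rightarrow>\<^sub>E VG. \<forall>x y. EH x y \<longrightarrow> EG (f x) (f y)}"

text \<open>The tree S_{2,1^k}: vertices {1..k+3}, edges {1,j} for 2 \<le> j \<le> k+2 and {k+2,k+3}.\<close>
definition S_verts :: "nat \<Rightarrow> nat set" where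
  "S_verts k = {1..k+3}"

definition S_edge :: "nat \<Rightarrow> nat \<Rightarrow> nat \<Rightarrow> bool" where
  "S_edge k x y \<longleftrightarrow>
     (x = 1 \<and> 2 \<le> y \<and> y \<le> k + 2) \<or> (y = 1 \<and> 2 \<le> x \<and> x \<le> k + 2)
     \<or> (x = k + 2 \<and> y = k + 3) \<or> (y = k + 2 \<and> x = k + 3)"

end

theory Submission
  imports Defs
begin

text \<open>Let D be the maximum degree of G and h k = hom(S_{2,1^k}; G). Sending the centre and
  the end of the long arm to a vertex of degree D, and the k + 1 neighbours of the centre
  independently into its neighbourhood, gives D^(k+1) \<le> h k. Deleting a leaf at the centre
  loses a factor of at most D, so h (k+1) \<le> D * h k. Hence
  h (k+1)^(k+1) \<le> D^(k+1) * h k^(k+1) \<le> h k^(k+2), the claim for m = k + 2.\<close>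

definition homs :: "'a set \<Rightarrow> ('a \<Rightarrow> 'a \<Rightarrow> bool) \<Rightarrow> 'b set \<Rightarrow> ('b \<Rightarrow> 'b \<Rightarrow> bool) \<Rightarrow> ('a \<Rightarrow> 'b) set" where
  "homs VH EH VG EG = {f \<in> VH \<rightarrow>\<^sub>E VG. \<forall>x y. EH x y \<longrightarrow> EG (f x) (f y)}"

lemma hom_count_eq_card_homs: "hom_count VH EH VG EG = card (homs VH EH VG EG)"
  by (simp add: hom_count_def homs_def)

lemma finite_homs:
  assumes "finite VH" and "finite VG"
  shows "finite (homs VH EH VG EG)"
proof (rule finite_subset)
  show "homs VH EH VG EG \<subseteq> VH \<rightarrow>\<^sub>E VG" by (auto simp: homs_def)
  show "finite (VH \<rightarrow>\<^sub>E VG)" using assms by (rule finite_PiE)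
qed

definition nbhd :: "('a \<Rightarrow> 'a \<Rightarrow> bool) \<Rightarrow> 'a \<Rightarrow> 'a set" where
  "nbhd E u = {v. E u v}"

lemma nbhd_subset:
  assumes "simple_graph V E"
  shows "nbhd E u \<subseteq> V"
  using assms by (auto simp: simple_graph_def nbhd_def)

lemma finite_nbhd:
  assumes "simple_graph V E"
  shows "finite (nbhd E u)"
  using finite_subset[OF nbhd_subset[OF assms]] assms by (simp add: simple_graph_def)

lemma finite_homs_S:
  assumes "simple_graph V E"
  shows "finite (homs (S_verts k) (S_edge k) V E)"
  using assms by (intro finite_homs) (simp_all add: S_verts_def simple_graph_def)

lemma S_edge_preserved_iff:
  assumes sym: "\<And>x y. E x y \<Longrightarrow> E y x"
  shows "(\<forall>x y. S_edge k x y \<longrightarrow> E (f x) (f y)) \<longleftrightarrow>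
           (\<forall>j\<in>{2..k+2}. E (f 1) (f j)) \<and> E (f (k+2)) (f (k+3))"
proof
  assume "\<forall>x y. S_edge k x y \<longrightarrow> E (f x) (f y)"
  then show "(\<forall>j\<in>{2..k+2}. E (f 1) (f j)) \<and> E (f (k+2)) (f (k+3))"
    by (auto simp: S_edge_def)
next
  assume "(\<forall>j\<in>{2..k+2}. E (f 1) (f j)) \<and> E (f (k+2)) (f (k+3))"
  then show "\<forall>x y. S_edge k x y \<longrightarrow> E (f x) (f y)"
    by (auto simp: S_edge_def intro: sym)
qed

lemma mem_homs_S_iff:
  assumes "simple_graph V E"
  shows "f \<in> homs (S_verts k) (S_edge k) V E \<longleftrightarrow>
           f \<in> S_verts k \<rightarrow>\<^sub>E V \<and> (\<forall>j\<in>{2..k+2}. E (f 1) (f j)) \<and> E (f (k+2)) (f (k+3))"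
proof -
  have "\<And>x y. E x y \<Longrightarrow> E y x" using assms by (simp add: simple_graph_def)
  then show ?thesis by (simp add: homs_def S_edge_preserved_iff)
qed

lemma card_nbhd_power_le_hom_count:
  assumes G: "simple_graph V E" and u: "u \<in> V"
  shows "card (nbhd E u) ^ (k+1) \<le> hom_count (S_verts k) (S_edge k) V E"
proof -
  have sym: "\<And>x y. E x y \<Longrightarrow> E y x" using G by (simp add: simple_graph_def)
  let ?L = "{2..k+2} \<rightarrow>\<^sub>E nbhd E u"
  define spread where
    "spread g = restrict (\<lambda>j. if j = 1 \<or> j = k+3 then u else g j) (S_verts k)" for g :: "nat \<Rightarrow> 'a"
  have spread_hom: "spread g \<in> homs (S_verts k) (S_edge k) V E" if g: "g \<in> ?L" for g
  proof -
    have g_nbhd: "\<And>j. j \<in> {2..k+2} \<Longrightarrow> g j \<in> nbhd E u" using g by auto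
    then have "\<And>j. j \<in> {2..k+2} \<Longrightarrow> E u (g j)" by (simp add: nbhd_def)
    moreover have "spread g \<in> S_verts k \<rightarrow>\<^sub>E V"
    proof -
      have "\<And>j. j \<in> {2..k+2} \<Longrightarrow> g j \<in> V" using g_nbhd nbhd_subset[OF G] by blast
      then show ?thesis using u by (auto simp: spread_def S_verts_def)
    qed
    ultimately show ?thesis
      unfolding mem_homs_S_iff[OF G] by (auto simp: spread_def S_verts_def intro: sym)
  qed
  have "inj_on spread ?L"
  proof (rule inj_onI)
    fix g g' assume g: "g \<in> ?L" and g': "g' \<in> ?L" and eq: "spread g = spread g'"
    show "g = g'"
    proof (rule PiE_ext[OF g g'])
      fix j assume "j \<in> {2..k+2}"
      then show "g j = g' j" using fun_cong[OF eq, of j] by (simp add: spread_def S_verts_def)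
    qed
  qed
  then have "card ?L \<le> card (homs (S_verts k) (S_edge k) V E)"
    using spread_hom finite_homs_S[OF G] by (intro card_inj_on_le) auto
  moreover have "card ?L = card (nbhd E u) ^ (k+1)"
    by (simp add: card_PiE)
  ultimately show ?thesis by (simp add: hom_count_eq_card_homs)
qed

lemma hom_count_S_Suc_le:
  assumes G: "simple_graph V E" and deg: "\<And>u. u \<in> V \<Longrightarrow> card (nbhd E u) \<le> D"
  shows "hom_count (S_verts (k+1)) (S_edge (k+1)) V E \<le> D * hom_count (S_verts k) (S_edge k) V E"
proof -
  let ?H = "homs (S_verts k) (S_edge k) V E"
  let ?H' = "homs (S_verts (k+1)) (S_edge (k+1)) V E"
  let ?S = "Sigma ?H (\<lambda>g. nbhd E (g 1))"
  \<comment> \<open>Vertex 2 is a leaf at the centre; deleting it and shifting 3..k+4 down by one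
    leaves a copy of S_{2,1^k}, and the deleted image is a neighbour of the centre's image.\<close>
  define drop_leaf where
    "drop_leaf f = (restrict (\<lambda>j. if j = 1 then f 1 else f (j+1)) (S_verts k), f 2)"
    for f :: "nat \<Rightarrow> 'a"
  have drop_leaf_in: "drop_leaf f \<in> ?S" if f: "f \<in> ?H'" for f
  proof -
    have f_V: "f \<in> S_verts (k+1) \<rightarrow>\<^sub>E V"
      and f_leaves: "\<forall>j\<in>{2..k+3}. E (f 1) (f j)" and f_arm: "E (f (k+3)) (f (k+4))"
      using f unfolding mem_homs_S_iff[OF G] by (simp_all add: numeral_eq_Suc)
    have "\<And>j. j \<in> {1..k+4} \<Longrightarrow> f j \<in> V"
      using f_V by (auto simp: S_verts_def)
    then have "fst (drop_leaf f) \<in> ?H"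
      unfolding mem_homs_S_iff[OF G] using f_leaves f_arm
      by (auto simp: drop_leaf_def S_verts_def numeral_eq_Suc)
    moreover have "snd (drop_leaf f) \<in> nbhd E (fst (drop_leaf f) 1)"
      using f_leaves by (simp add: drop_leaf_def S_verts_def nbhd_def)
    ultimately show ?thesis by (metis SigmaI prod.collapse)
  qed
  have inj: "inj_on drop_leaf ?H'"
  proof (rule inj_onI)
    fix f f' assume f: "f \<in> ?H'" and f': "f' \<in> ?H'" and eq: "drop_leaf f = drop_leaf f'"
    have "f \<in> S_verts (k+1) \<rightarrow>\<^sub>E V" "f' \<in> S_verts (k+1) \<rightarrow>\<^sub>E V"
      using f f' by (simp_all add: homs_def)
    then show "f = f'"
    proof (rule PiE_ext)
      fix j assume j: "j \<in> S_verts (k+1)"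
      have pointwise: "\<And>i. fst (drop_leaf f) i = fst (drop_leaf f') i" using eq by simp
      have first: "f 1 = f' 1"
        using pointwise[of 1] by (simp add: drop_leaf_def S_verts_def)
      have shifted: "f (i+1) = f' (i+1)" if "i \<in> {2..k+3}" for i
        using pointwise[of i] that by (simp add: drop_leaf_def S_verts_def)
      have second: "f 2 = f' 2" using eq by (simp add: drop_leaf_def)
      have "j = 1 \<or> j = 2 \<or> (j - 1 \<in> {2..k+3} \<and> j = (j - 1) + 1)"
        using j by (auto simp: S_verts_def)
      then show "f j = f' j" using first second shifted by metis
    qed
  qed
  have "finite ?S" using finite_homs_S[OF G] finite_nbhd[OF G] by blast
  then have "card ?H' \<le> card ?S"
    using card_inj_on_le[OF inj image_subsetI[OF drop_leaf_in]] by blast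
  also have "card ?S = (\<Sum>g\<in>?H. card (nbhd E (g 1)))"
    using finite_homs_S[OF G] finite_nbhd[OF G] by simp
  also have "\<dots> \<le> (\<Sum>g\<in>?H. D)"
    by (intro sum_mono deg) (auto simp: homs_def S_verts_def)
  finally show ?thesis by (simp add: hom_count_eq_card_homs mult.commute)
qed

lemma power_le_power_Suc_if_le_mult:
  fixes a b D :: nat
  assumes "D ^ n \<le> a" and "b \<le> D * a"
  shows "b ^ n \<le> a ^ Suc n"
proof -
  have "b ^ n \<le> (D * a) ^ n" using assms(2) by (rule power_mono) simp
  also have "\<dots> = D ^ n * a ^ n" by (rule power_mult_distrib)
  also have "\<dots> \<le> a * a ^ n" using assms(1) by (rule mult_right_mono) simp
  finally show ?thesis by simp
qed

lemma degree_bound_power_le_hom_count: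
  assumes "simple_graph V E"
  obtains D where "\<And>u. u \<in> V \<Longrightarrow> card (nbhd E u) \<le> D"
    and "D ^ (k+1) \<le> hom_count (S_verts k) (S_edge k) V E"
proof (cases "V = {}")
  case True
  then show ?thesis using that[of 0] by simp
next
  case False
  have fin: "finite V" using assms by (simp add: simple_graph_def)
  define D where "D = Max ((\<lambda>v. card (nbhd E v)) ` V)"
  have "D \<in> (\<lambda>v. card (nbhd E v)) ` V" using fin False by (simp add: D_def)
  then obtain u where "u \<in> V" and "D = card (nbhd E u)" by blast
  moreover have "\<And>v. v \<in> V \<Longrightarrow> card (nbhd E v) \<le> D" using fin by (simp add: D_def)
  ultimately show ?thesis using that card_nbhd_power_le_hom_count[OF assms] by blast
qed

theorem theorem3p5:
  fixes V :: "'a set" and E :: "'a \<Rightarrow> 'a \<Rightarrow> bool" and m :: nat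
  assumes "simple_graph V E" and "m \<ge> 2"
  shows "hom_count (S_verts (m - 2)) (S_edge (m - 2)) V E ^ m
           \<ge> hom_count (S_verts (m - 1)) (S_edge (m - 1)) V E ^ (m - 1)"
proof -
  obtain k where "m = k + 2" using assms(2) by (metis add.commute le_Suc_ex)
  then have k: "m - 2 = k" and m1: "m - 1 = k + 1" and m: "m = Suc (k + 1)" by simp_all
  obtain D where deg: "\<And>u. u \<in> V \<Longrightarrow> card (nbhd E u) \<le> D"
    and lower: "D ^ (k+1) \<le> hom_count (S_verts k) (S_edge k) V E"
    using degree_bound_power_le_hom_count[OF assms(1)] by metis
  have upper:
    "hom_count (S_verts (k+1)) (S_edge (k+1)) V E \<le> D * hom_count (S_verts k) (S_edge k) V E"
    using hom_count_S_Suc_le[OF assms(1) deg] .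
  show ?thesis
    unfolding k m1 using power_le_power_Suc_if_le_mult[OF lower upper] by (simp only: m)
qed

end
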